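(* Let $M\ge1$ be an integer, let $\lambda,\omega,T>0$, $\alpha,\beta\ge0$, and let $f_0\ge f^*$ be reals. For $\rho\in[0,1)$ satisfying $\lambda<\frac{1-\sqrt\rho}{6\sqrt M\,\omega}$ define $$G(\rho)=\frac{M\lambda^2\omega^2}{(1-\sqrt\rho)^2-18M\lambda^2\omega^2},\qquad B(\rho)=\frac{1}{\tfrac12-9G(\rho)}\left(\frac{f_0-f^*}{\lambda T}+\frac{\lambda\omega\alpha^2}{2M}+\alpha^2G(\rho)+9\beta^2G(\rho)\right).$$ Then $B$ is a monotonically increasing function of $\rho$ on this domain.
   Context: $B(\rho)$ is the right-hand side of the paper's ergodic convergence bound for decentralized federated learning, with $\rho=\rho(\overline{\mathbf W^2})=\max\{\lambda_2(\overline{\mathbf W^2}),-\lambda_M(\overline{\mathbf W^2})\}$, the second-largest-in-magnitude eigenvalue of the expected squared mixing matrix; $M$ is the number of devices, $\lambda$ the learning rate, $\omega$ the gradient Lipschitz constant, $\alpha^2,\beta^2$ variance bounds, $T$ the number of rounds, $f_0$ the initial and $f^*$ the optimal loss value. *)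

theory Defs
  imports Complex_Main
begin

definition G_fun :: "nat \<Rightarrow> real \<Rightarrow> real \<Rightarrow> real \<Rightarrow> real" where
  "G_fun M lam \<omega> \<rho> =
     (real M * lam\<^sup>2 * \<omega>\<^sup>2) / ((1 - sqrt \<rho>)\<^sup>2 - 18 * real M * lam\<^sup>2 * \<omega>\<^sup>2)"

definition B_fun :: "nat \<Rightarrow> real \<Rightarrow> real \<Rightarrow> real \<Rightarrow> real \<Rightarrow> real \<Rightarrow> real \<Rightarrow> real \<Rightarrow> real \<Rightarrow> real" where
  "B_fun M lam \<omega> \<alpha> \<beta> T f0 fstar \<rho> =
     (1 / (1/2 - 9 * G_fun M lam \<omega> \<rho>)) *
     ((f0 - fstar) / (lam * T) + lam * \<omega> * \<alpha>\<^sup>2 / (2 * real M)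
      + \<alpha>\<^sup>2 * G_fun M lam \<omega> \<rho> + 9 * \<beta>\<^sup>2 * G_fun M lam \<omega> \<rho>)"

definition B_domain :: "nat \<Rightarrow> real \<Rightarrow> real \<Rightarrow> real set" where
  "B_domain M lam \<omega> = {\<rho>. 0 \<le> \<rho> \<and> \<rho> < 1 \<and> lam < (1 - sqrt \<rho>) / (6 * sqrt (real M) * \<omega>)}"

end

theory Submission
  imports Defs
begin

text \<open>With \<open>c = M \<lambda>\<^sup>2 \<omega>\<^sup>2\<close>, the domain condition gives \<open>36 c < (1 - \<surd>\<rho>)\<^sup>2\<close>.
  Hence \<open>G(\<rho>) = c / ((1 - \<surd>\<rho>)\<^sup>2 - 18 c)\<close> increases with \<open>\<rho>\<close> and stays in \<open>[0, 1/18)\<close>.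
  \<open>B\<close> depends on \<open>\<rho>\<close> only through \<open>G\<close>, via \<open>g \<mapsto> (K + a g) / (1/2 - 9 g)\<close> with
  \<open>K, a \<ge> 0\<close>; this map is increasing on \<open>[0, 1/18)\<close>, since cross-multiplying two of its values
  leaves the difference \<open>(g\<^sub>2 - g\<^sub>1)(9 K + a/2) \<ge> 0\<close>.\<close>

lemma mono_on_linear_fractional:
  fixes K a :: real
  assumes "K \<ge> 0" "a \<ge> 0"
  shows "mono_on {0..<1/18} (\<lambda>g. (1 / (1/2 - 9 * g)) * (K + a * g))"
proof (rule mono_onI)
  fix g1 g2 :: real
  assume "g1 \<in> {0..<1/18}" "g2 \<in> {0..<1/18}" "g1 \<le> g2"
  then have pos: "1/2 - 9 * g1 > 0" "1/2 - 9 * g2 > 0" and "g1 \<le> g2" by auto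
  have "(K + a * g2) * (1/2 - 9 * g1) - (K + a * g1) * (1/2 - 9 * g2) = (g2 - g1) * (9 * K + a / 2)"
    by (simp add: algebra_simps add_divide_distrib diff_divide_distrib)
  also have "\<dots> \<ge> 0"
    using assms \<open>g1 \<le> g2\<close> by simp
  finally show "(1 / (1/2 - 9 * g1)) * (K + a * g1) \<le> (1 / (1/2 - 9 * g2)) * (K + a * g2)"
    using pos by (simp add: divide_simps algebra_simps)
qed

lemma B_domain_bound:
  fixes M :: nat and lam \<omega> \<rho> :: real
  assumes "M \<ge> 1" "lam > 0" "\<omega> > 0" "\<rho> \<in> B_domain M lam \<omega>"
  shows "36 * (real M * lam\<^sup>2 * \<omega>\<^sup>2) < (1 - sqrt \<rho>)\<^sup>2"
proof -
  have "0 < 6 * sqrt (real M) * \<omega>"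
    using assms(1,3) by simp
  then have "lam * (6 * sqrt (real M) * \<omega>) < 1 - sqrt \<rho>"
    using assms(4) by (simp add: B_domain_def pos_less_divide_eq)
  moreover have "0 \<le> lam * (6 * sqrt (real M) * \<omega>)"
    using assms(1-3) by simp
  ultimately have "(lam * (6 * sqrt (real M) * \<omega>))\<^sup>2 < (1 - sqrt \<rho>)\<^sup>2"
    by (rule power_strict_mono) simp
  then show ?thesis
    by (simp add: power_mult_distrib mult_ac)
qed

lemma G_fun_bounds:
  fixes M :: nat and lam \<omega> \<rho> :: real
  assumes "M \<ge> 1" "lam > 0" "\<omega> > 0" "\<rho> \<in> B_domain M lam \<omega>"
  shows "G_fun M lam \<omega> \<rho> \<in> {0..<1/18}"
proof -
  define c where "c = real M * lam\<^sup>2 * \<omega>\<^sup>2"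
  have "c > 0" "36 * c < (1 - sqrt \<rho>)\<^sup>2"
    using assms B_domain_bound[OF assms] unfolding c_def by simp_all
  moreover have "G_fun M lam \<omega> \<rho> = c / ((1 - sqrt \<rho>)\<^sup>2 - 18 * c)"
    unfolding G_fun_def c_def by (simp add: mult.assoc)
  ultimately show ?thesis
    by (simp only: atLeastLessThan_iff) (simp add: divide_simps)
qed

lemma mono_on_G_fun:
  fixes M :: nat and lam \<omega> :: real
  assumes "M \<ge> 1" "lam > 0" "\<omega> > 0"
  shows "mono_on (B_domain M lam \<omega>) (G_fun M lam \<omega>)"
proof (rule mono_onI)
  fix x y
  assume x: "x \<in> B_domain M lam \<omega>" and y: "y \<in> B_domain M lam \<omega>" and "x \<le> y"
  define c where "c = real M * lam\<^sup>2 * \<omega>\<^sup>2"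
  have "c > 0"
    using assms unfolding c_def by simp
  have bound: "36 * c < (1 - sqrt x)\<^sup>2" "36 * c < (1 - sqrt y)\<^sup>2"
    using B_domain_bound[OF assms x] B_domain_bound[OF assms y] unfolding c_def by simp_all
  have "sqrt x \<le> sqrt y" "sqrt y < 1"
    using \<open>x \<le> y\<close> y by (simp_all add: B_domain_def)
  then have "(1 - sqrt y)\<^sup>2 \<le> (1 - sqrt x)\<^sup>2"
    by (intro power_mono) auto
  then have "c / ((1 - sqrt x)\<^sup>2 - 18 * c) \<le> c / ((1 - sqrt y)\<^sup>2 - 18 * c)"
    using \<open>c > 0\<close> bound by (intro divide_left_mono) auto
  then show "G_fun M lam \<omega> x \<le> G_fun M lam \<omega> y"
    unfolding G_fun_def c_def by (simp add: mult.assoc)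
qed

lemma B_fun_via_G_fun:
  "B_fun M lam \<omega> \<alpha> \<beta> T f0 fstar \<rho> =
     (1 / (1/2 - 9 * G_fun M lam \<omega> \<rho>)) *
     (((f0 - fstar) / (lam * T) + lam * \<omega> * \<alpha>\<^sup>2 / (2 * real M))
      + (\<alpha>\<^sup>2 + 9 * \<beta>\<^sup>2) * G_fun M lam \<omega> \<rho>)"
  unfolding B_fun_def by (simp add: algebra_simps)

theorem proposition1:
  fixes M :: nat and lam \<omega> T \<alpha> \<beta> f0 fstar :: real
  assumes "M \<ge> 1" and "lam > 0" and "\<omega> > 0" and "T > 0"
    and "\<alpha> \<ge> 0" and "\<beta> \<ge> 0" and "f0 \<ge> fstar"
  shows "mono_on (B_domain M lam \<omega>) (B_fun M lam \<omega> \<alpha> \<beta> T f0 fstar)"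
proof -
  define K where "K = (f0 - fstar) / (lam * T) + lam * \<omega> * \<alpha>\<^sup>2 / (2 * real M)"
  have "K \<ge> 0"
    using assms unfolding K_def by simp
  then have mono_h: "mono_on {0..<1/18} (\<lambda>g. (1 / (1/2 - 9 * g)) * (K + (\<alpha>\<^sup>2 + 9 * \<beta>\<^sup>2) * g))"
    by (intro mono_on_linear_fractional) simp_all
  have image: "G_fun M lam \<omega> ` B_domain M lam \<omega> \<subseteq> {0..<1/18}"
    using G_fun_bounds[OF assms(1-3)] by blast
  have "mono_on (B_domain M lam \<omega>)
      ((\<lambda>g. (1 / (1/2 - 9 * g)) * (K + (\<alpha>\<^sup>2 + 9 * \<beta>\<^sup>2) * g)) \<circ> G_fun M lam \<omega>)"
    by (rule monotone_on_o[OF mono_h mono_on_G_fun[OF assms(1-3)] image])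
  then show ?thesis
    unfolding K_def by (simp add: comp_def B_fun_via_G_fun[abs_def])
qed

end
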